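(* Let $n_C,n_D\in\mathbb{N}$ and $\mathcal{S}=\{(s_C,s_D)\in\mathbb{N}_0^2: s_C\le n_C,\ s_D\le n_D\}$, enumerated as $\mathbf{s}_1,\dots,\mathbf{s}_{|\mathcal{S}|}$ with index map $\phi(\mathbf{s}_i)=i$. For $\boldsymbol\theta=(\theta_C,\theta_D)\in[0,1]^2$ let $\mathbb{P}_{\boldsymbol\theta}(\mathbf{S}=\mathbf{s})=\binom{n_C}{s_C}\theta_C^{s_C}(1-\theta_C)^{n_C-s_C}\binom{n_D}{s_D}\theta_D^{s_D}(1-\theta_D)^{n_D-s_D}$. Let $g_0$ be an increasing, differentiable function with $g_0(0)\in[0,1]$ and $g_0^{-1}(1)$ defined, and for $K\in\mathbb{N}$ let $0=\theta_1<\theta_2<\dots<\theta_K=g_0^{-1}(1)$. Let $d:\mathcal{S}\to\{0,1\}$ be a decision function, identified with the vector $\mathbf{d}\in\{0,1\}^{|\mathcal{S}|}$, $d_i=d(\mathbf{s}_i)$, satisfying Barnard's convexity condition: $d(\mathbf{s}-(1,0))\ge d(\mathbf{s})$ and $d(\mathbf{s}+(0,1))\ge d(\mathbf{s})$ for all $\mathbf{s}\in\mathcal{S}$ (whenever the shifted vector lies in $\mathcal{S}$). For $\theta\in[0,g_0^{-1}(1)]$ let $r_d(\theta)=\mathbb{P}_{(\theta,g_0(\theta))}(d(\mathbf{S})=1)$, and let $\mathbf{p}_{j,0}\in\mathbb{R}^{|\mathcal{S}|}$ have entries $p_{i,j,0}=\mathbb{P}_{(\theta_j,g_0(\theta_j))}(\mathbf{S}=\mathbf{s}_i)$,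 so that $r_d(\theta_j)=\mathbf{p}_{j,0}^\top\mathbf{d}$. Let $\mathbf{A}_C,\mathbf{A}_D$ be the $|\mathcal{S}|\times|\mathcal{S}|$ matrices whose $i$-th rows are $\mathbf{e}_i-\mathbf{e}_{\phi(\mathbf{s}_i+(1,0))}$ and $\mathbf{e}_i-\mathbf{e}_{\phi(\mathbf{s}_i-(0,1))}$ respectively, where $\mathbf{e}_i$ is the $i$-th standard unit vector and $\mathbf{e}_{\phi(\mathbf{s})}:=\mathbf{0}$ if $\mathbf{s}\notin\mathcal{S}$. For $j\in\{1,\dots,K-1\}$ define vectors $\mathbf{m}_{j,D},\mathbf{m}_{j,C}$ with entries (writing $\mathbf{s}_i=(s_C,s_D)$) $$m_{i,j,D}=n_D(\theta_{j+1}-\theta_j)\binom{n_C}{s_C}\binom{n_D-1}{s_D-1}\max_{\theta\in[\theta_j,\theta_{j+1}]} g_0'(\theta)\,\theta^{s_C}g_0(\theta)^{s_D-1}(1-\theta)^{n_C-s_C}(1-g_0(\theta))^{n_D-s_D},$$ $$m_{i,j,C}=n_C(\theta_{j+1}-\theta_j)\binom{n_C-1}{s_C}\binom{n_D}{s_D}\min_{\theta\in[\theta_j,\theta_{j+1}]} \theta^{s_C}g_0(\theta)^{s_D}(1-\theta)^{n_C-s_C-1}(1-g_0(\theta))^{n_D-s_D}.$$ Then for every $j\in\{1,\dots,K-1\}$ and every $\theta\in(\theta_j,\theta_{j+1})$, $$r_d(\theta)\le \mathbf{p}_{j,0}^\top\mathbf{d}+\max\bigl(0,\ (\mathbf{m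}_{j,D}^\top\mathbf{A}_D-\mathbf{m}_{j,C}^\top\mathbf{A}_C)\mathbf{d}\bigr).$$
   Context: Conventions: $\binom{a}{b}=0$ if $b<0$ or $b>a$, and any entry whose binomial coefficient factor is $0$ is taken to be $0$ (regardless of negative exponents in the accompanying function). The setting is the one-sided two-sample binomial test of $H_0:\theta_D\le g_0(\theta_C)$, with $r_d$ the rejection rate of $d$ along the boundary $\{(\theta,g_0(\theta))\}$ of the null parameter set. *)

theory Defs
  imports "HOL-Analysis.Analysis"
begin

definition Sset :: "nat \<Rightarrow> nat \<Rightarrow> (nat \<times> nat) set" where
  "Sset nC nD = {(a, b). a \<le> nC \<and> b \<le> nD}"

definition prob :: "nat \<Rightarrow> nat \<Rightarrow> real \<Rightarrow> real \<Rightarrow> nat \<times> nat \<Rightarrow> real" where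
  "prob nC nD tC tD s =
     real (nC choose fst s) * tC ^ fst s * (1 - tC) ^ (nC - fst s)
   * real (nD choose snd s) * tD ^ snd s * (1 - tD) ^ (nD - snd s)"

definition rej :: "nat \<Rightarrow> nat \<Rightarrow> (real \<Rightarrow> real) \<Rightarrow> (nat \<times> nat \<Rightarrow> real) \<Rightarrow> real \<Rightarrow> real" where
  "rej nC nD g0 d t = (\<Sum>s\<in>{s\<in>Sset nC nD. d s = 1}. prob nC nD t (g0 t) s)"

text \<open>Vectors indexed by S; inner product and row-vector * matrix * column-vector.\<close>
definition dotS :: "nat \<Rightarrow> nat \<Rightarrow> (nat \<times> nat \<Rightarrow> real) \<Rightarrow> (nat \<times> nat \<Rightarrow> real) \<Rightarrow> real" where
  "dotS nC nD u v = (\<Sum>s\<in>Sset nC nD. u s * v s)"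

definition vmv :: "nat \<Rightarrow> nat \<Rightarrow> (nat \<times> nat \<Rightarrow> real) \<Rightarrow> (nat \<times> nat \<Rightarrow> nat \<times> nat \<Rightarrow> real)
                   \<Rightarrow> (nat \<times> nat \<Rightarrow> real) \<Rightarrow> real" where
  "vmv nC nD m A v = (\<Sum>s\<in>Sset nC nD. \<Sum>s'\<in>Sset nC nD. m s * A s s' * v s')"

definition AC :: "nat \<Rightarrow> nat \<Rightarrow> nat \<times> nat \<Rightarrow> nat \<times> nat \<Rightarrow> real" where
  "AC nC nD s s' = (if s' = s then 1 else 0)
     - (if (fst s + 1, snd s) \<in> Sset nC nD \<and> s' = (fst s + 1, snd s) then 1 else 0)"

definition AD :: "nat \<Rightarrow> nat \<Rightarrow> nat \<times> nat \<Rightarrow> nat \<times> nat \<Rightarrow> real" where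
  "AD nC nD s s' = (if s' = s then 1 else 0)
     - (if 1 \<le> snd s \<and> s' = (fst s, snd s - 1) then 1 else 0)"

text \<open>m_{j,D}; the entry is 0 when sD = 0 since binom(nD-1, -1) = 0. The max is
  rendered as a supremum (it equals the max whenever the max exists).\<close>
definition mD :: "nat \<Rightarrow> nat \<Rightarrow> (real \<Rightarrow> real) \<Rightarrow> (real \<Rightarrow> real) \<Rightarrow> (nat \<Rightarrow> real) \<Rightarrow> nat
                  \<Rightarrow> nat \<times> nat \<Rightarrow> real" where
  "mD nC nD g0 g0' th j s =
    (if snd s = 0 then 0 else
      real nD * (th (j + 1) - th j) * real (nC choose fst s) * real ((nD - 1) choose (snd s - 1))
      * (SUP t\<in>{th j..th (j + 1)}. g0' t * t ^ fst s * g0 t ^ (snd s - 1)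
                                   * (1 - t) ^ (nC - fst s) * (1 - g0 t) ^ (nD - snd s)))"

text \<open>m_{j,C}; the entry is 0 when sC = nC since binom(nC-1, nC) = 0 (nat choose).\<close>
definition mC :: "nat \<Rightarrow> nat \<Rightarrow> (real \<Rightarrow> real) \<Rightarrow> (nat \<Rightarrow> real) \<Rightarrow> nat
                  \<Rightarrow> nat \<times> nat \<Rightarrow> real" where
  "mC nC nD g0 th j s =
    (if nC \<le> fst s then 0 else
      real nC * (th (j + 1) - th j) * real ((nC - 1) choose fst s) * real (nD choose snd s)
      * (INF t\<in>{th j..th (j + 1)}. t ^ fst s * g0 t ^ snd s
                                   * (1 - t) ^ (nC - fst s - 1) * (1 - g0 t) ^ (nD - snd s)))"

end

theory Submission
  imports Defs
begin

text \<open>Along the boundary the rejection rate is a polynomial in Bernstein form,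
  r_d(\<theta>) = \<Sum> d(a,b) B_{nC,a}(\<theta>) B_{nD,b}(g0 \<theta>). Differentiating a Bernstein
  sum and summing by parts turns r_d' into a combination of the differences
  d(a+1,b) - d(a,b) \<le> 0 and d(a,b+1) - d(a,b) \<ge> 0 controlled by Barnard's condition,
  weighted by products of Bernstein polynomials of lower degree (times g0' for the second
  kind). Replacing these weights by their infimum resp. supremum over [\<theta>_j, \<theta>_(j+1)]
  gives (\<theta>_(j+1) - \<theta>_j) r_d'(z) \<le> (m_D A_D - m_C A_C) d for every z in the interval.
  The mean value theorem on [\<theta>_j, \<theta>] then bounds r_d(\<theta>) - r_d(\<theta>_j) by a fraction in
  [0, 1] of that right-hand side, hence by its positive part.\<close>

definition Bernstein_deriv :: "nat \<Rightarrow> nat \<Rightarrow> real \<Rightarrow> real" where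
  "Bernstein_deriv n k x =
     real n * ((if k = 0 then 0 else Bernstein (n - 1) (k - 1) x) - Bernstein (n - 1) k x)"

lemma has_real_derivative_Bernstein:
  "(Bernstein n k has_real_derivative Bernstein_deriv n k x) (at x within S)"
proof -
  have "(Bernstein n k has_real_derivative
          real k * real (n choose k) * x ^ (k - 1) * (1 - x) ^ (n - k)
          - real (n - k) * real (n choose k) * x ^ k * (1 - x) ^ (n - k - 1)) (at x within S)"
    unfolding Bernstein_def by (auto intro!: derivative_eq_intros simp: algebra_simps)
  moreover have "real k * real (n choose k) * x ^ (k - 1) * (1 - x) ^ (n - k)
      = real n * (if k = 0 then 0 else Bernstein (n - 1) (k - 1) x)"
  proof (cases k)
    case (Suc i)
    then have "real k * real (n choose k) = real n * real ((n - 1) choose i)"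
      by (metis binomial_absorption of_nat_mult)
    then show ?thesis by (simp add: Suc Bernstein_def)
  qed simp
  moreover have "real (n - k) * real (n choose k) * x ^ k * (1 - x) ^ (n - k - 1)
      = real n * Bernstein (n - 1) k x"
    by (simp add: Bernstein_def binomial_absorb_comp flip: of_nat_mult)
  ultimately show ?thesis
    by (simp add: Bernstein_deriv_def right_diff_distrib)
qed

lemma sum_Bernstein_deriv:
  "(\<Sum>k\<le>n. h k * Bernstein_deriv n k x)
   = real n * (\<Sum>k<n. (h (Suc k) - h k) * Bernstein (n - 1) k x)"
proof (cases n)
  case 0
  then show ?thesis by (simp add: Bernstein_deriv_def)
next
  case (Suc m)
  have shifted: "(\<Sum>k\<le>n. h k * (if k = 0 then 0 else Bernstein (n - 1) (k - 1) x))
      = (\<Sum>k<n. h (Suc k) * Bernstein (n - 1) k x)"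
    unfolding Suc by (subst sum.atMost_Suc_shift) (simp add: lessThan_Suc_atMost)
  have top_vanishes: "(\<Sum>k\<le>n. h k * Bernstein (n - 1) k x) = (\<Sum>k<n. h k * Bernstein (n - 1) k x)"
    by (simp add: Suc lessThan_Suc_atMost[symmetric] Bernstein_def)
  have "(\<Sum>k\<le>n. h k * Bernstein_deriv n k x)
      = real n * ((\<Sum>k\<le>n. h k * (if k = 0 then 0 else Bernstein (n - 1) (k - 1) x))
                  - (\<Sum>k\<le>n. h k * Bernstein (n - 1) k x))"
    unfolding Bernstein_deriv_def sum_subtractf[symmetric] sum_distrib_left
    by (rule sum.cong) (simp_all add: algebra_simps)
  also have "\<dots> = real n * (\<Sum>k<n. (h (Suc k) - h k) * Bernstein (n - 1) k x)"
    unfolding shifted top_vanishes by (simp add: sum_subtractf left_diff_distrib)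
  finally show ?thesis .
qed

lemma sum_Bernstein_deriv_fst:
  "(\<Sum>a\<le>m. \<Sum>b\<le>n. h (a, b) * Bernstein_deriv m a x * w b)
   = real m * (\<Sum>a<m. \<Sum>b\<le>n. (h (Suc a, b) - h (a, b)) * Bernstein (m - 1) a x * w b)"
proof -
  have "(\<Sum>a\<le>m. \<Sum>b\<le>n. h (a, b) * Bernstein_deriv m a x * w b)
      = (\<Sum>b\<le>n. \<Sum>a\<le>m. (h (a, b) * w b) * Bernstein_deriv m a x)"
    by (subst sum.swap) (simp add: mult_ac)
  also have "\<dots> = (\<Sum>b\<le>n. real m * (\<Sum>a<m. (h (Suc a, b) * w b - h (a, b) * w b) * Bernstein (m - 1) a x))"
    by (simp only: sum_Bernstein_deriv)
  also have "\<dots> = real m * (\<Sum>a<m. \<Sum>b\<le>n. (h (Suc a, b) - h (a, b)) * Bernstein (m - 1) a x * w b)"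
    by (simp add: sum_distrib_left algebra_simps sum.swap[of _ "{..n}"])
  finally show ?thesis .
qed

lemma sum_Bernstein_deriv_snd:
  "(\<Sum>a\<le>m. \<Sum>b\<le>n. h (a, b) * w a * Bernstein_deriv n b y)
   = real n * (\<Sum>a\<le>m. \<Sum>b<n. (h (a, Suc b) - h (a, b)) * w a * Bernstein (n - 1) b y)"
proof -
  have "(\<Sum>a\<le>m. \<Sum>b\<le>n. h (a, b) * w a * Bernstein_deriv n b y)
      = (\<Sum>a\<le>m. real n * (\<Sum>b<n. (h (a, Suc b) * w a - h (a, b) * w a) * Bernstein (n - 1) b y))"
    by (simp only: sum_Bernstein_deriv)
  also have "\<dots> = real n * (\<Sum>a\<le>m. \<Sum>b<n. (h (a, Suc b) - h (a, b)) * w a * Bernstein (n - 1) b y)"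
    by (simp add: sum_distrib_left algebra_simps)
  finally show ?thesis .
qed

lemma sum_Sset: "(\<Sum>s\<in>Sset nC nD. f s) = (\<Sum>a\<le>nC. \<Sum>b\<le>nD. f (a, b))"
proof -
  have "Sset nC nD = {..nC} \<times> {..nD}" by (auto simp: Sset_def)
  then show ?thesis by (simp add: sum.cartesian_product)
qed

lemma finite_Sset: "finite (Sset nC nD)"
  by (rule finite_subset[of _ "{..nC} \<times> {..nD}"]) (auto simp: Sset_def)

lemma prob_eq_Bernstein: "prob nC nD u v (a, b) = Bernstein nC a u * Bernstein nD b v"
  by (simp add: prob_def Bernstein_def)

lemma rej_eq_dotS:
  assumes "\<And>s. s \<in> Sset nC nD \<Longrightarrow> d s = 0 \<or> d s = 1"
  shows "rej nC nD g0 d t = dotS nC nD (\<lambda>s. prob nC nD t (g0 t) s) d"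
proof -
  have "rej nC nD g0 d t = (\<Sum>s\<in>Sset nC nD. if d s = 1 then prob nC nD t (g0 t) s else 0)"
    unfolding rej_def by (rule sum.inter_filter[OF finite_Sset])
  also have "\<dots> = dotS nC nD (\<lambda>s. prob nC nD t (g0 t) s) d"
    unfolding dotS_def by (rule sum.cong) (use assms in auto)
  finally show ?thesis .
qed

text \<open>The derivative of r_d, already summed by parts.\<close>

definition rej_deriv :: "nat \<Rightarrow> nat \<Rightarrow> (real \<Rightarrow> real) \<Rightarrow> (real \<Rightarrow> real) \<Rightarrow> (nat \<times> nat \<Rightarrow> real)
                         \<Rightarrow> real \<Rightarrow> real" where
  "rej_deriv nC nD g0 g0' d x =
     real nC * (\<Sum>a<nC. \<Sum>b\<le>nD. (d (Suc a, b) - d (a, b)) * Bernstein (nC - 1) a x * Bernstein nD b (g0 x))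
   + real nD * g0' x
     * (\<Sum>a\<le>nC. \<Sum>b<nD. (d (a, Suc b) - d (a, b)) * Bernstein nC a x * Bernstein (nD - 1) b (g0 x))"

lemma has_real_derivative_dotS_prob:
  assumes g0: "(g0 has_real_derivative g0' x) (at x within S)"
  shows "((\<lambda>x. dotS nC nD (\<lambda>s. prob nC nD x (g0 x) s) d) has_real_derivative rej_deriv nC nD g0 g0' d x)
           (at x within S)"
proof -
  define y where "y = g0 x"
  have dotS_eq: "dotS nC nD (\<lambda>s. prob nC nD u (g0 u) s) d
      = (\<Sum>a\<le>nC. \<Sum>b\<le>nD. d (a, b) * (Bernstein nC a u * Bernstein nD b (g0 u)))" for u
    by (simp add: dotS_def sum_Sset prob_eq_Bernstein mult_ac)
  have "((\<lambda>x. \<Sum>a\<le>nC. \<Sum>b\<le>nD. d (a, b) * (Bernstein nC a x * Bernstein nD b (g0 x))) has_real_derivative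
          (\<Sum>a\<le>nC. \<Sum>b\<le>nD. d (a, b) * (Bernstein nC a x * (Bernstein_deriv nD b y * g0' x)
                                           + Bernstein_deriv nC a x * Bernstein nD b y)))
          (at x within S)"
    unfolding y_def
    by (intro DERIV_sum DERIV_cmult DERIV_mult' has_real_derivative_Bernstein
          DERIV_chain2[OF has_real_derivative_Bernstein g0])
  moreover have "(\<Sum>a\<le>nC. \<Sum>b\<le>nD. d (a, b) * (Bernstein nC a x * (Bernstein_deriv nD b y * g0' x)
                                           + Bernstein_deriv nC a x * Bernstein nD b y))
      = (\<Sum>a\<le>nC. \<Sum>b\<le>nD. d (a, b) * Bernstein nC a x * Bernstein_deriv nD b y) * g0' x
        + (\<Sum>a\<le>nC. \<Sum>b\<le>nD. d (a, b) * Bernstein_deriv nC a x * Bernstein nD b y)"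
    by (simp add: sum_distrib_left sum_distrib_right sum.distrib algebra_simps)
  ultimately show ?thesis
    unfolding dotS_eq rej_deriv_def y_def sum_Bernstein_deriv_fst[where h = d] sum_Bernstein_deriv_snd[where h = d]
    by (simp add: algebra_simps)
qed

lemma vmv_AC:
  assumes "\<And>b. m (nC, b) = 0"
  shows "vmv nC nD m (AC nC nD) v = (\<Sum>a<nC. \<Sum>b\<le>nD. m (a, b) * (v (a, b) - v (Suc a, b)))"
proof -
  have row: "(\<Sum>s'\<in>Sset nC nD. AC nC nD (a, b) s' * v s') = v (a, b) - (if a < nC then v (Suc a, b) else 0)"
    if "a \<le> nC" "b \<le> nD" for a b
  proof -
    have "(\<Sum>s'\<in>Sset nC nD. AC nC nD (a, b) s' * v s')
        = (\<Sum>s'\<in>Sset nC nD. if s' = (a, b) then v s' else 0)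
          - (\<Sum>s'\<in>Sset nC nD. if (Suc a, b) \<in> Sset nC nD \<and> s' = (Suc a, b) then v s' else 0)"
      unfolding sum_subtractf[symmetric] AC_def by (rule sum.cong) auto
    then show ?thesis
      using that by (simp add: Sset_def if_distrib finite_Sset cong: if_cong)
  qed
  have "vmv nC nD m (AC nC nD) v = (\<Sum>s\<in>Sset nC nD. m s * (\<Sum>s'\<in>Sset nC nD. AC nC nD s s' * v s'))"
    unfolding vmv_def by (simp add: sum_distrib_left mult.assoc)
  also have "\<dots> = (\<Sum>a\<le>nC. \<Sum>b\<le>nD. m (a, b) * (v (a, b) - (if a < nC then v (Suc a, b) else 0)))"
    by (subst sum_Sset) (simp add: row)
  finally show ?thesis by (simp add: lessThan_Suc_atMost[symmetric] assms)
qed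

lemma vmv_AD:
  assumes "\<And>a. m (a, 0) = 0"
  shows "vmv nC nD m (AD nC nD) v = (\<Sum>a\<le>nC. \<Sum>b<nD. m (a, Suc b) * (v (a, Suc b) - v (a, b)))"
proof -
  have row: "(\<Sum>s'\<in>Sset nC nD. AD nC nD (a, b) s' * v s') = v (a, b) - (if 0 < b then v (a, b - 1) else 0)"
    if "a \<le> nC" "b \<le> nD" for a b
  proof -
    have "(\<Sum>s'\<in>Sset nC nD. AD nC nD (a, b) s' * v s')
        = (\<Sum>s'\<in>Sset nC nD. if s' = (a, b) then v s' else 0)
          - (\<Sum>s'\<in>Sset nC nD. if 1 \<le> b \<and> s' = (a, b - 1) then v s' else 0)"
      unfolding sum_subtractf[symmetric] AD_def by (rule sum.cong) auto
    then show ?thesis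
      using that by (simp add: Sset_def if_distrib finite_Sset cong: if_cong)
  qed
  have "vmv nC nD m (AD nC nD) v = (\<Sum>s\<in>Sset nC nD. m s * (\<Sum>s'\<in>Sset nC nD. AD nC nD s s' * v s'))"
    unfolding vmv_def by (simp add: sum_distrib_left mult.assoc)
  also have "\<dots> = (\<Sum>a\<le>nC. \<Sum>b\<le>nD. m (a, b) * (v (a, b) - (if 0 < b then v (a, b - 1) else 0)))"
    by (subst sum_Sset) (simp add: row)
  finally show ?thesis by (simp add: sum.atMost_shift assms)
qed

lemma mult_le_max_0:
  fixes c y X :: real
  assumes "0 \<le> c" "c \<le> 1" "y \<le> X"
  shows "c * y \<le> max 0 X"
proof (cases "0 \<le> y")
  case True
  then have "c * y \<le> y" using assms by (simp add: mult_left_le_one_le)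
  then show ?thesis using assms by simp
next
  case False
  then have "c * y \<le> 0" using assms by (simp add: mult_nonneg_nonpos)
  then show ?thesis by simp
qed

lemma mC_le_Bernstein:
  assumes a: "a < nC" and z: "z \<in> {th j..th (j + 1)}"
    and range: "\<And>t. t \<in> {th j..th (j + 1)} \<Longrightarrow> 0 \<le> t \<and> t \<le> 1 \<and> 0 \<le> g0 t \<and> g0 t \<le> 1"
  shows "mC nC nD g0 th j (a, b)
           \<le> (th (j + 1) - th j) * real nC * Bernstein (nC - 1) a z * Bernstein nD b (g0 z)"
proof -
  define f where "f t = t ^ a * g0 t ^ b * (1 - t) ^ (nC - a - 1) * (1 - g0 t) ^ (nD - b)" for t
  define c where "c = real nC * (th (j + 1) - th j) * real ((nC - 1) choose a) * real (nD choose b)"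
  have "mC nC nD g0 th j (a, b) = c * (INF t\<in>{th j..th (j + 1)}. f t)"
    using a by (simp add: mC_def c_def f_def)
  also have "\<dots> \<le> c * f z"
  proof (rule mult_left_mono)
    show "(INF t\<in>{th j..th (j + 1)}. f t) \<le> f z"
      by (rule cINF_lower[OF bdd_belowI2[of _ 0] z]) (use range in \<open>simp add: f_def\<close>)
    show "0 \<le> c" using z by (simp add: c_def)
  qed
  also have "\<dots> = (th (j + 1) - th j) * real nC * Bernstein (nC - 1) a z * Bernstein nD b (g0 z)"
    by (simp add: c_def f_def Bernstein_def)
  finally show ?thesis .
qed

lemma mD_ge_Bernstein:
  assumes b: "b < nD" and z: "z \<in> {th j..th (j + 1)}"
    and range: "\<And>t. t \<in> {th j..th (j + 1)} \<Longrightarrow> 0 \<le> t \<and> t \<le> 1 \<and> 0 \<le> g0 t \<and> g0 t \<le> 1"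
    and g0'_bdd: "bdd_above (g0' ` {th j..th (j + 1)})"
  shows "(th (j + 1) - th j) * real nD * g0' z * Bernstein nC a z * Bernstein (nD - 1) b (g0 z)
           \<le> mD nC nD g0 g0' th j (a, Suc b)"
proof -
  define w where "w t = t ^ a * g0 t ^ b * (1 - t) ^ (nC - a) * (1 - g0 t) ^ (nD - Suc b)" for t
  define c where "c = real nD * (th (j + 1) - th j) * real (nC choose a) * real ((nD - 1) choose b)"
  obtain B where B: "\<And>t. t \<in> {th j..th (j + 1)} \<Longrightarrow> g0' t \<le> B"
    using g0'_bdd unfolding bdd_above_def by blast
  have w_01: "0 \<le> w t \<and> w t \<le> 1" if "t \<in> {th j..th (j + 1)}" for t
    using range[OF that] by (simp add: w_def mult_le_one power_le_one)
  have "(th (j + 1) - th j) * real nD * g0' z * Bernstein nC a z * Bernstein (nD - 1) b (g0 z)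
      = c * (g0' z * w z)"
    by (simp add: c_def w_def Bernstein_def)
  also have "\<dots> \<le> c * (SUP t\<in>{th j..th (j + 1)}. g0' t * w t)"
  proof (rule mult_left_mono)
    show "g0' z * w z \<le> (SUP t\<in>{th j..th (j + 1)}. g0' t * w t)"
    proof (rule cSUP_upper[OF z bdd_aboveI2])
      fix t assume "t \<in> {th j..th (j + 1)}"
      then show "g0' t * w t \<le> max 0 B"
        using mult_le_max_0[of "w t" "g0' t" B] w_01 B by (simp add: mult.commute)
    qed
    show "0 \<le> c" using z by (simp add: c_def)
  qed
  also have "\<dots> = mD nC nD g0 g0' th j (a, Suc b)"
    by (simp add: mD_def c_def w_def mult.assoc)
  finally show ?thesis .
qed

lemma diff_fst_term_le_vmv_AC:
  assumes z: "z \<in> {th j..th (j + 1)}"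
    and range: "\<And>t. t \<in> {th j..th (j + 1)} \<Longrightarrow> 0 \<le> t \<and> t \<le> 1 \<and> 0 \<le> g0 t \<and> g0 t \<le> 1"
    and barnard_C: "\<And>a b. (a, b) \<in> Sset nC nD \<Longrightarrow> 1 \<le> a \<Longrightarrow> d (a - 1, b) \<ge> d (a, b)"
  shows "(th (j + 1) - th j) * (real nC * (\<Sum>a<nC. \<Sum>b\<le>nD. (d (Suc a, b) - d (a, b))
                                    * Bernstein (nC - 1) a z * Bernstein nD b (g0 z)))
           \<le> - vmv nC nD (mC nC nD g0 th j) (AC nC nD) d"
proof -
  define \<Delta> where "\<Delta> = th (j + 1) - th j"
  have "\<Delta> * (real nC * (\<Sum>a<nC. \<Sum>b\<le>nD. (d (Suc a, b) - d (a, b))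
                                   * Bernstein (nC - 1) a z * Bernstein nD b (g0 z)))
      = (\<Sum>a<nC. \<Sum>b\<le>nD. (\<Delta> * real nC * Bernstein (nC - 1) a z * Bernstein nD b (g0 z))
                            * (d (Suc a, b) - d (a, b)))"
    by (simp add: sum_distrib_left mult_ac)
  also have "\<dots> \<le> (\<Sum>a<nC. \<Sum>b\<le>nD. mC nC nD g0 th j (a, b) * (d (Suc a, b) - d (a, b)))"
  proof (intro sum_mono mult_right_mono_neg)
    fix a b assume "a \<in> {..<nC}" "b \<in> {..nD}"
    then show "mC nC nD g0 th j (a, b) \<le> \<Delta> * real nC * Bernstein (nC - 1) a z * Bernstein nD b (g0 z)"
      and "d (Suc a, b) - d (a, b) \<le> 0"
      using mC_le_Bernstein[OF _ z range] barnard_C[of "Suc a" b] by (simp_all add: \<Delta>_def Sset_def)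
  qed
  also have "\<dots> = - vmv nC nD (mC nC nD g0 th j) (AC nC nD) d"
    by (simp add: vmv_AC mC_def sum_negf[symmetric] algebra_simps)
  finally show ?thesis unfolding \<Delta>_def .
qed

lemma diff_snd_term_le_vmv_AD:
  assumes z: "z \<in> {th j..th (j + 1)}"
    and range: "\<And>t. t \<in> {th j..th (j + 1)} \<Longrightarrow> 0 \<le> t \<and> t \<le> 1 \<and> 0 \<le> g0 t \<and> g0 t \<le> 1"
    and g0'_bdd: "bdd_above (g0' ` {th j..th (j + 1)})"
    and barnard_D: "\<And>a b. (a, b) \<in> Sset nC nD \<Longrightarrow> b + 1 \<le> nD \<Longrightarrow> d (a, b + 1) \<ge> d (a, b)"
  shows "(th (j + 1) - th j) * (real nD * g0' z * (\<Sum>a\<le>nC. \<Sum>b<nD. (d (a, Suc b) - d (a, b))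
                                    * Bernstein nC a z * Bernstein (nD - 1) b (g0 z)))
           \<le> vmv nC nD (mD nC nD g0 g0' th j) (AD nC nD) d"
proof -
  define \<Delta> where "\<Delta> = th (j + 1) - th j"
  have "\<Delta> * (real nD * g0' z * (\<Sum>a\<le>nC. \<Sum>b<nD. (d (a, Suc b) - d (a, b))
                                   * Bernstein nC a z * Bernstein (nD - 1) b (g0 z)))
      = (\<Sum>a\<le>nC. \<Sum>b<nD. (\<Delta> * real nD * g0' z * Bernstein nC a z * Bernstein (nD - 1) b (g0 z))
                            * (d (a, Suc b) - d (a, b)))"
    by (simp add: sum_distrib_left mult_ac)
  also have "\<dots> \<le> (\<Sum>a\<le>nC. \<Sum>b<nD. mD nC nD g0 g0' th j (a, Suc b) * (d (a, Suc b) - d (a, b)))"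
  proof (intro sum_mono mult_right_mono)
    fix a b assume "a \<in> {..nC}" "b \<in> {..<nD}"
    then show "\<Delta> * real nD * g0' z * Bernstein nC a z * Bernstein (nD - 1) b (g0 z)
                 \<le> mD nC nD g0 g0' th j (a, Suc b)"
      and "0 \<le> d (a, Suc b) - d (a, b)"
      using mD_ge_Bernstein[OF _ z range g0'_bdd] barnard_D[of a b] by (simp_all add: \<Delta>_def Sset_def)
  qed
  also have "\<dots> = vmv nC nD (mD nC nD g0 g0' th j) (AD nC nD) d"
    by (simp add: vmv_AD mD_def)
  finally show ?thesis unfolding \<Delta>_def .
qed

lemma rej_deriv_le_vmv:
  assumes z: "z \<in> {th j..th (j + 1)}"
    and range: "\<And>t. t \<in> {th j..th (j + 1)} \<Longrightarrow> 0 \<le> t \<and> t \<le> 1 \<and> 0 \<le> g0 t \<and> g0 t \<le> 1"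
    and g0'_bdd: "bdd_above (g0' ` {th j..th (j + 1)})"
    and barnard_C: "\<And>a b. (a, b) \<in> Sset nC nD \<Longrightarrow> 1 \<le> a \<Longrightarrow> d (a - 1, b) \<ge> d (a, b)"
    and barnard_D: "\<And>a b. (a, b) \<in> Sset nC nD \<Longrightarrow> b + 1 \<le> nD \<Longrightarrow> d (a, b + 1) \<ge> d (a, b)"
  shows "(th (j + 1) - th j) * rej_deriv nC nD g0 g0' d z
           \<le> vmv nC nD (mD nC nD g0 g0' th j) (AD nC nD) d - vmv nC nD (mC nC nD g0 th j) (AC nC nD) d"
  using diff_fst_term_le_vmv_AC[where d = d and nC = nC and nD = nD, OF z range barnard_C]
    diff_snd_term_le_vmv_AD[where d = d and nC = nC and nD = nD, OF z range g0'_bdd barnard_D]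
  unfolding rej_deriv_def by (simp add: distrib_left)

lemma dotS_prob_increment_le:
  assumes t: "t \<in> {th j<..<th (j + 1)}"
    and g0_deriv: "\<And>x. x \<in> {th j..th (j + 1)} \<Longrightarrow>
                     (g0 has_real_derivative g0' x) (at x within {th j..th (j + 1)})"
    and range: "\<And>t. t \<in> {th j..th (j + 1)} \<Longrightarrow> 0 \<le> t \<and> t \<le> 1 \<and> 0 \<le> g0 t \<and> g0 t \<le> 1"
    and g0'_bdd: "bdd_above (g0' ` {th j..th (j + 1)})"
    and barnard_C: "\<And>a b. (a, b) \<in> Sset nC nD \<Longrightarrow> 1 \<le> a \<Longrightarrow> d (a - 1, b) \<ge> d (a, b)"
    and barnard_D: "\<And>a b. (a, b) \<in> Sset nC nD \<Longrightarrow> b + 1 \<le> nD \<Longrightarrow> d (a, b + 1) \<ge> d (a, b)"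
  shows "dotS nC nD (\<lambda>s. prob nC nD t (g0 t) s) d
           \<le> dotS nC nD (\<lambda>s. prob nC nD (th j) (g0 (th j)) s) d
             + max 0 (vmv nC nD (mD nC nD g0 g0' th j) (AD nC nD) d
                      - vmv nC nD (mC nC nD g0 th j) (AC nC nD) d)"
proof -
  define r where "r x = dotS nC nD (\<lambda>s. prob nC nD x (g0 x) s) d" for x
  have "\<exists>z\<in>{th j<..<t}. r t - r (th j) = rej_deriv nC nD g0 g0' d z * (t - th j)"
  proof (rule mvt_simple)
    fix x assume "th j \<le> x" "x \<le> t"
    then have "(r has_real_derivative rej_deriv nC nD g0 g0' d x) (at x within {th j..t})"
      unfolding r_def using t by (intro has_real_derivative_dotS_prob DERIV_subset[OF g0_deriv]) auto
    then show "(r has_derivative (*) (rej_deriv nC nD g0 g0' d x)) (at x within {th j..t})"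
      by (simp add: has_field_derivative_def)
  qed (use t in simp)
  then obtain z where z: "z \<in> {th j<..<t}"
    and mvt: "r t - r (th j) = (t - th j) * rej_deriv nC nD g0 g0' d z"
    by (auto simp: mult.commute)
  have "(th (j + 1) - th j) * rej_deriv nC nD g0 g0' d z
          \<le> vmv nC nD (mD nC nD g0 g0' th j) (AD nC nD) d - vmv nC nD (mC nC nD g0 th j) (AC nC nD) d"
    by (rule rej_deriv_le_vmv[where d = d and nC = nC and nD = nD, OF _ range g0'_bdd barnard_C barnard_D])
      (use z t in auto)
  then have "(t - th j) / (th (j + 1) - th j) * ((th (j + 1) - th j) * rej_deriv nC nD g0 g0' d z)
               \<le> max 0 (vmv nC nD (mD nC nD g0 g0' th j) (AD nC nD) d
                        - vmv nC nD (mC nC nD g0 th j) (AC nC nD) d)"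
    by (rule mult_le_max_0[rotated 2]) (use t in auto)
  then show ?thesis
    using t by (simp add: r_def[symmetric] mvt[symmetric])
qed

theorem theorem2:
  fixes nC nD K :: nat and g0 g0' :: "real \<Rightarrow> real" and tmax :: real
    and th :: "nat \<Rightarrow> real" and d :: "nat \<times> nat \<Rightarrow> real"
  assumes nC: "1 \<le> nC" and nD: "1 \<le> nD"
    and tmax: "0 \<le> tmax" "tmax \<le> 1"
    and g0_mono: "strict_mono_on {0..tmax} g0"
    and g0_deriv: "\<And>x. x \<in> {0..tmax} \<Longrightarrow> (g0 has_real_derivative g0' x) (at x within {0..tmax})"
    and g0_deriv_bdd: "bdd_above (g0' ` {0..tmax})"
    and g0_0: "0 \<le> g0 0" "g0 0 \<le> 1"
    and g0_tmax: "g0 tmax = 1"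
    and K: "1 \<le> K"
    and th_1: "th 1 = 0" and th_K: "th K = tmax"
    and th_incr: "\<And>j. 1 \<le> j \<Longrightarrow> j < K \<Longrightarrow> th j < th (j + 1)"
    and d_01: "\<And>s. s \<in> Sset nC nD \<Longrightarrow> d s = 0 \<or> d s = 1"
    and barnard_C: "\<And>a b. (a, b) \<in> Sset nC nD \<Longrightarrow> 1 \<le> a \<Longrightarrow> d (a - 1, b) \<ge> d (a, b)"
    and barnard_D: "\<And>a b. (a, b) \<in> Sset nC nD \<Longrightarrow> b + 1 \<le> nD \<Longrightarrow> d (a, b + 1) \<ge> d (a, b)"
  shows "\<forall>j\<in>{1..K - 1}. \<forall>t\<in>{th j<..<th (j + 1)}.
           rej nC nD g0 d t
           \<le> dotS nC nD (\<lambda>s. prob nC nD (th j) (g0 (th j)) s) d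
             + max 0 (vmv nC nD (mD nC nD g0 g0' th j) (AD nC nD) d
                      - vmv nC nD (mC nC nD g0 th j) (AC nC nD) d)"
proof (intro ballI)
  fix j t
  assume j: "j \<in> {1..K - 1}" and t: "t \<in> {th j<..<th (j + 1)}"
  have th_mono: "th i \<le> th k" if "1 \<le> i" "i \<le> k" "k \<le> K" for i k
    by (rule lift_Suc_mono_le_ivl[of "{1..<K}"]) (use that th_incr less_imp_le in auto)
  have I_sub: "{th j..th (j + 1)} \<subseteq> {0..tmax}"
    using th_mono[of 1 j] th_mono[of "j + 1" K] j th_1 th_K by auto
  have range: "0 \<le> x \<and> x \<le> 1 \<and> 0 \<le> g0 x \<and> g0 x \<le> 1" if "x \<in> {0..tmax}" for x
    using that tmax g0_0 g0_tmax strict_mono_on_leD[OF g0_mono, of 0 x]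
      strict_mono_on_leD[OF g0_mono, of x tmax]
    by auto
  have g0'_bdd: "bdd_above (g0' ` {th j..th (j + 1)})"
    using g0_deriv_bdd I_sub by (meson bdd_above_mono image_mono)
  have "dotS nC nD (\<lambda>s. prob nC nD t (g0 t) s) d
          \<le> dotS nC nD (\<lambda>s. prob nC nD (th j) (g0 (th j)) s) d
            + max 0 (vmv nC nD (mD nC nD g0 g0' th j) (AD nC nD) d
                     - vmv nC nD (mC nC nD g0 th j) (AC nC nD) d)"
  proof (rule dotS_prob_increment_le[where d = d and nC = nC and nD = nD,
                                     OF t _ _ g0'_bdd barnard_C barnard_D])
    fix x assume x: "x \<in> {th j..th (j + 1)}"
    then show "(g0 has_real_derivative g0' x) (at x within {th j..th (j + 1)})"
      using I_sub by (intro DERIV_subset[OF g0_deriv]) auto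
    show "0 \<le> x \<and> x \<le> 1 \<and> 0 \<le> g0 x \<and> g0 x \<le> 1"
      using x I_sub range by blast
  qed
  then show "rej nC nD g0 d t
          \<le> dotS nC nD (\<lambda>s. prob nC nD (th j) (g0 (th j)) s) d
            + max 0 (vmv nC nD (mD nC nD g0 g0' th j) (AD nC nD) d
                     - vmv nC nD (mC nC nD g0 th j) (AC nC nD) d)"
    by (simp only: rej_eq_dotS[OF d_01])
qed

end
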